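(* Let $\mathbf{r}=(r_0,r_1,r_2,\ldots)$ be the regular paperfolding sequence. For every positive integer $k$, the $t$-Hankel determinant $H_k(\mathbf{r},t)$ is a polynomial in $t$ of degree less than or equal to $3$.
   Context: The regular paperfolding sequence $\mathbf{r}$ is defined by the generating function $\sum_{n\ge0}r_nx^n=\sum_{n\ge0}\frac{x^{2^n-1}}{1-x^{2^{n+2}}}$, so $\mathbf{r}=(1,1,0,1,1,0,0,\ldots)$. For a sequence $\mathbf{c}=(c_0,c_1,\ldots)$, a parameter $t$ and $k\ge1$, the $t$-Hankel determinant is $H_k(\mathbf{c},t)=\det(a_{ij})_{0\le i,j\le k-1}$ where $a_{ij}=c_{i+j}$ for $i\ne j$ and $a_{ii}=c_{2i}\,t$ (i.e. the ordinary Hankel determinant with every diagonal entry multiplied by $t$). *)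

theory Defs
  imports "Jordan_Normal_Form.Determinant" "HOL-Computational_Algebra.Polynomial"
begin

text \<open>Regular paperfolding sequence: r n is the coefficient of x^n in
  sum over m of x^(2^m - 1) / (1 - x^(2^(m+2))), i.e. the number of pairs (m, j)
  with n = 2^m - 1 + j * 2^(m+2).\<close>
definition paperfold :: "nat \<Rightarrow> nat" where
  "paperfold n = card {m. 2 ^ m - 1 \<le> n \<and> 2 ^ (m + 2) dvd (n - (2 ^ m - 1))}"

definition t_hankel_matrix :: "(nat \<Rightarrow> int) \<Rightarrow> nat \<Rightarrow> int poly mat" where
  "t_hankel_matrix c k = mat k k (\<lambda>(i, j).
     if i = j then smult (c (2 * i)) [:0, 1:] else [:c (i + j):])"

definition t_hankel :: "(nat \<Rightarrow> int) \<Rightarrow> nat \<Rightarrow> int poly" where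
  "t_hankel c k = det (t_hankel_matrix c k)"

end

theory Submission
  imports Defs
begin

text \<open>At even indices the paperfolding sequence is 1 exactly on the multiples of 4, so t occurs
  in the t-Hankel matrix of r only at the diagonal positions (i, i) with i even; and for odd i, j
  the entry r (i + j) depends only on i mod 4. Subtracting from every odd row i \<ge> 5 the row
  i mod 4 therefore clears the odd columns of these rows without changing the determinant. In a
  nonvanishing Leibniz term of the reduced matrix every odd row i \<ge> 5 is matched with an even
  column, which leaves at most three even columns for diagonal positions carrying t.\<close>

lemma paperfold_even:
  assumes "even n"
  shows "paperfold n = (if 4 dvd n then 1 else 0)"
proof -
  let ?S = "{m. 2 ^ m - 1 \<le> n \<and> 2 ^ (m + 2) dvd (n - (2 ^ m - 1))}"
  have "m = 0" if m: "m \<in> ?S" for m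
  proof (rule ccontr)
    assume "m \<noteq> 0"
    have parity: "odd (n - (x - 1))" if "even x" "x \<ge> 1" "x - 1 \<le> n" for x :: nat
      using that assms by presburger
    have "odd (n - (2 ^ m - 1))"
      using \<open>m \<noteq> 0\<close> m by (intro parity) auto
    moreover have "even (n - (2 ^ m - 1))"
    proof (rule dvd_trans)
      show "(2::nat) dvd 2 ^ (m + 2)" by simp
      show "2 ^ (m + 2) dvd n - (2 ^ m - 1)" using m by simp
    qed
    ultimately show False by simp
  qed
  then have "?S \<subseteq> {0}" by blast
  moreover have "0 \<in> ?S \<longleftrightarrow> 4 dvd n" by simp
  ultimately have "?S = (if 4 dvd n then {0} else {})"
    by (cases "4 dvd n") (simp_all only: if_True if_False, blast+)
  then show ?thesis by (simp add: paperfold_def)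
qed

lemma degree_det_le:
  fixes Q :: "'a :: comm_ring_1 poly mat"
  assumes Q: "Q \<in> carrier_mat k k"
    and bound: "\<And>p. p permutes {..<k} \<Longrightarrow> (\<And>i. i < k \<Longrightarrow> Q $$ (i, p i) \<noteq> 0) \<Longrightarrow>
      (\<Sum>i<k. degree (Q $$ (i, p i))) \<le> d"
  shows "degree (det Q) \<le> d"
  unfolding det_def'[OF Q] atLeast0LessThan
proof (rule degree_sum_le)
  fix p assume "p \<in> {p. p permutes {..<k}}"
  then have p: "p permutes {..<k}" by simp
  have "degree (signof p * (\<Prod>i<k. Q $$ (i, p i))) \<le> degree (\<Prod>i<k. Q $$ (i, p i))"
    using degree_mult_le[of "signof p"] by simp
  also have "\<dots> \<le> d"
  proof (cases "\<exists>i<k. Q $$ (i, p i) = 0")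
    case True
    then have "(\<Prod>i<k. Q $$ (i, p i)) = 0" by (intro prod_zero) auto
    then show ?thesis by simp
  next
    case False
    have "degree (\<Prod>i<k. Q $$ (i, p i)) \<le> (\<Sum>i<k. degree (Q $$ (i, p i)))"
      using degree_prod_sum_le[of "{..<k}"] by (simp add: comp_def)
    also have "\<dots> \<le> d" using bound[OF p] False by blast
    finally show ?thesis .
  qed
  finally show "degree (signof p * (\<Prod>i<k. Q $$ (i, p i))) \<le> d" .
qed (simp add: finite_permutations)

lemma card_fixpoints_add_card_le:
  assumes "inj p" "p ` B \<subseteq> E" "B \<inter> E = {}" "finite E"
  shows "card {i \<in> E. p i = i} + card B \<le> card E"
proof -
  let ?F = "{i \<in> E. p i = i}"
  have "?F \<inter> p ` B = {}"
    using assms(1,3) by (auto simp: inj_eq)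
  then have "card ?F + card (p ` B) = card (?F \<union> p ` B)"
    using assms(2,4) by (intro card_Un_disjoint[symmetric]) (auto intro: finite_subset)
  also have "\<dots> \<le> card E"
    using assms(2,4) by (intro card_mono) auto
  finally show ?thesis
    using card_image[OF inj_on_subset[OF assms(1)], of B] by simp
qed

lemma card_even_less_le:
  fixes k :: nat
  shows "card {i. i < k \<and> even i} \<le> card {i. i < k \<and> odd i \<and> 5 \<le> i} + 3"
proof -
  let ?B = "{i. i < k \<and> odd i \<and> 5 \<le> i}"
  have "{i. i < k \<and> even i} \<subseteq> {0, 2, 4} \<union> Suc ` ?B"
  proof
    fix x assume x: "x \<in> {i. i < k \<and> even i}"
    show "x \<in> {0, 2, 4} \<union> Suc ` ?B"
    proof (cases "x \<le> 4")
      case True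
      then show ?thesis using x by auto
    next
      case False
      then have "x - 1 \<in> ?B" "x = Suc (x - 1)" using x by auto
      then show ?thesis by blast
    qed
  qed
  then have "card {i. i < k \<and> even i} \<le> card ({0, 2, 4} \<union> Suc ` ?B)"
    by (intro card_mono) auto
  also have "\<dots> \<le> card {0, 2, 4 :: nat} + card (Suc ` ?B)"
    by (rule card_Un_le)
  also have "\<dots> \<le> card ?B + 3"
    using card_image_le[of ?B Suc] by simp
  finally show ?thesis .
qed

lemma card_even_fixpoints_le:
  fixes k :: nat
  assumes p: "p permutes {..<k}"
    and odd_to_even: "\<And>i. i < k \<Longrightarrow> odd i \<Longrightarrow> 5 \<le> i \<Longrightarrow> even (p i)"
  shows "card {i. i < k \<and> even i \<and> p i = i} \<le> 3"
proof -
  let ?E = "{i. i < k \<and> even i}" and ?B = "{i. i < k \<and> odd i \<and> 5 \<le> i}"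
  have "p ` ?B \<subseteq> ?E"
    using odd_to_even permutes_in_image[OF p] by auto
  then have "card {i \<in> ?E. p i = i} + card ?B \<le> card ?E"
    using permutes_inj[OF p] by (intro card_fixpoints_add_card_le) auto
  moreover have "{i \<in> ?E. p i = i} = {i. i < k \<and> even i \<and> p i = i}" by auto
  ultimately show ?thesis
    using card_even_less_le[of k] by simp
qed

definition row_elim_mat :: "nat \<Rightarrow> nat set \<Rightarrow> (nat \<Rightarrow> nat) \<Rightarrow> 'a :: ring_1 mat" where
  "row_elim_mat k S f =
     mat k k (\<lambda>(i, j). if i = j then 1 else if i \<in> S \<and> j = f i then -1 else 0)"

lemma row_elim_mat_carrier: "row_elim_mat k S f \<in> carrier_mat k k"
  by (simp add: row_elim_mat_def)

lemma det_row_elim_mat: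
  assumes "\<And>i. i \<in> S \<Longrightarrow> f i < i"
  shows "det (row_elim_mat k S f :: 'a :: comm_ring_1 mat) = 1"
proof -
  have "det (row_elim_mat k S f :: 'a mat) = prod_list (diag_mat (row_elim_mat k S f))"
    using assms by (intro det_lower_triangular[of k]) (auto simp: row_elim_mat_def dest: less_asym)
  also have "diag_mat (row_elim_mat k S f) = replicate k (1 :: 'a)"
    by (rule nth_equalityI) (auto simp: diag_mat_def row_elim_mat_def)
  finally show ?thesis by simp
qed

lemma row_elim_mat_mult_index:
  fixes M :: "'a :: ring_1 mat"
  assumes M: "M \<in> carrier_mat k n" and i: "i < k" and j: "j < n"
    and f: "i \<in> S \<Longrightarrow> f i < k \<and> f i \<noteq> i"
  shows "(row_elim_mat k S f * M) $$ (i, j) = M $$ (i, j) - (if i \<in> S then M $$ (f i, j) else 0)"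
proof -
  have "(row_elim_mat k S f * M) $$ (i, j) = (\<Sum>l<k. row_elim_mat k S f $$ (i, l) * M $$ (l, j))"
    using M i j by (auto simp: scalar_prod_def row_elim_mat_def atLeast0LessThan)
  also have "\<dots> = (\<Sum>l<k. (if l = i then M $$ (l, j) else 0)
      - (if i \<in> S \<and> l = f i then M $$ (l, j) else 0))"
    using f by (intro sum.cong) (auto simp: row_elim_mat_def i)
  also have "\<dots> = M $$ (i, j) - (if i \<in> S then M $$ (f i, j) else 0)"
    using i f by (simp add: sum_subtractf)
  finally show ?thesis .
qed

lemma t_hankel_matrix_paperfold_index:
  assumes "i < k" "j < k"
  shows "t_hankel_matrix (\<lambda>n. int (paperfold n)) k $$ (i, j) =
    (if i = j \<and> even i then [:0, 1:] else [:int (paperfold (i + j)):])"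
proof -
  have "paperfold (2 * i) = (if even i then 1 else 0)"
    using paperfold_even[of "2 * i"] by (simp add: dvd_mult_cancel_left[where c = 2, simplified])
  then show ?thesis
    using assms by (auto simp: t_hankel_matrix_def mult_2)
qed

lemma paperfold_odd_add_odd:
  assumes "odd i" "odd j"
  shows "paperfold (i + j) = paperfold (i mod 4 + j)"
proof -
  have "4 dvd (i + j) \<longleftrightarrow> 4 dvd (i mod 4 + j)" by presburger
  moreover have "even (i + j)" "even (i mod 4 + j)" using assms by presburger+
  ultimately show ?thesis by (simp add: paperfold_even)
qed

definition paperfold_hankel_reduced :: "nat \<Rightarrow> int poly mat" where
  "paperfold_hankel_reduced k =
     row_elim_mat k {i. odd i \<and> 5 \<le> i} (\<lambda>i. i mod 4) * t_hankel_matrix (\<lambda>n. int (paperfold n)) k"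

lemma paperfold_hankel_reduced_carrier: "paperfold_hankel_reduced k \<in> carrier_mat k k"
  unfolding paperfold_hankel_reduced_def
  by (rule mult_carrier_mat[OF row_elim_mat_carrier]) (simp add: t_hankel_matrix_def)

lemma det_paperfold_hankel_reduced:
  "det (paperfold_hankel_reduced k) = t_hankel (\<lambda>n. int (paperfold n)) k"
proof -
  have "det (row_elim_mat k {i. odd i \<and> 5 \<le> i} (\<lambda>i. i mod 4) :: int poly mat) = 1"
    by (rule det_row_elim_mat) auto
  moreover have "t_hankel_matrix (\<lambda>n. int (paperfold n)) k \<in> carrier_mat k k"
    by (simp add: t_hankel_matrix_def)
  ultimately show ?thesis
    unfolding paperfold_hankel_reduced_def t_hankel_def
    by (simp add: det_mult[OF row_elim_mat_carrier])
qed

lemma paperfold_hankel_reduced_index: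
  assumes i: "i < k" and j: "j < k"
  shows "paperfold_hankel_reduced k $$ (i, j) =
    (if odd i \<and> 5 \<le> i then [:int (paperfold (i + j)) - int (paperfold (i mod 4 + j)):]
     else t_hankel_matrix (\<lambda>n. int (paperfold n)) k $$ (i, j))"
proof -
  let ?M = "t_hankel_matrix (\<lambda>n. int (paperfold n)) k"
  have M: "?M \<in> carrier_mat k k" by (simp add: t_hankel_matrix_def)
  show ?thesis
  proof (cases "odd i \<and> 5 \<le> i")
    case True
    then have "odd (i mod 4)" "i mod 4 < k" "i mod 4 \<noteq> i"
      using i by presburger+
    then have "paperfold_hankel_reduced k $$ (i, j) = ?M $$ (i, j) - ?M $$ (i mod 4, j)"
      unfolding paperfold_hankel_reduced_def
      using True by (subst row_elim_mat_mult_index[OF M i j]) auto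
    also have "\<dots> = [:int (paperfold (i + j)) - int (paperfold (i mod 4 + j)):]"
      using True i j \<open>i mod 4 < k\<close> \<open>odd (i mod 4)\<close>
      by (simp add: t_hankel_matrix_paperfold_index)
    finally show ?thesis using True by simp
  next
    case False
    then show ?thesis
      unfolding paperfold_hankel_reduced_def
      by (subst row_elim_mat_mult_index[OF M i j]) auto
  qed
qed

lemma degree_paperfold_hankel_reduced_index:
  assumes "i < k" "j < k"
  shows "degree (paperfold_hankel_reduced k $$ (i, j)) \<le> (if even i \<and> j = i then 1 else 0)"
  using assms by (auto simp: paperfold_hankel_reduced_index t_hankel_matrix_paperfold_index)

lemma paperfold_hankel_reduced_odd_odd:
  assumes "i < k" "j < k" "odd i" "5 \<le> i" "odd j"
  shows "paperfold_hankel_reduced k $$ (i, j) = 0"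
  using assms by (simp add: paperfold_hankel_reduced_index paperfold_odd_add_odd)

theorem theorem1p4:
  fixes k :: nat
  assumes "k \<ge> 1"
  shows "degree (t_hankel (\<lambda>n. int (paperfold n)) k) \<le> 3"
  unfolding det_paperfold_hankel_reduced[symmetric]
proof (rule degree_det_le[OF paperfold_hankel_reduced_carrier])
  fix p assume p: "p permutes {..<k}"
    and nonzero: "\<And>i. i < k \<Longrightarrow> paperfold_hankel_reduced k $$ (i, p i) \<noteq> 0"
  have p_less: "p i < k" if "i < k" for i
    using permutes_in_image[OF p] that by simp
  have "(\<Sum>i<k. degree (paperfold_hankel_reduced k $$ (i, p i)))
      \<le> (\<Sum>i<k. if even i \<and> p i = i then 1 else 0)"
    using degree_paperfold_hankel_reduced_index p_less by (intro sum_mono) auto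
  also have "\<dots> = card {i. i < k \<and> even i \<and> p i = i}"
    by (simp add: sum.If_cases lessThan_def Collect_conj_eq[symmetric])
  also have "\<dots> \<le> 3"
    using p paperfold_hankel_reduced_odd_odd nonzero p_less
    by (intro card_even_fixpoints_le) blast+
  finally show "(\<Sum>i<k. degree (paperfold_hankel_reduced k $$ (i, p i))) \<le> 3" .
qed

end
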